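(* Let $m\ge 3$, $H=B(l_1,\ldots,l_m)$ and $G=H^2$. Then $G$ is equitably $(m+2)$-choosable.
   Context: All graphs are finite and simple. For $m,l_1,\ldots,l_m\in\mathbb{N}$ with $l_1\le\cdots\le l_m$, $B(l_1,\ldots,l_m)$ is the graph with vertex set $\{u\}\cup\{v_{i,j}: i\in[m], j\in[l_i]\}$ in which, for each $i\in[m]$, consecutive vertices in the sequence $u, v_{i,1},\ldots,v_{i,l_i}$ are adjacent (and there are no other edges). For a graph $H$, $H^2$ has vertex set $V(H)$ with two vertices adjacent iff their distance in $H$ is 1 or 2. A $k$-assignment $L$ assigns to each vertex a set of exactly $k$ colors; an equitable $L$-coloring of $G$ is a proper coloring $f$ with $f(v)\in L(v)$ such that no color is used more than $\lceil |V(G)|/k\rceil$ times; $G$ is equitably $k$-choosable if it has an equitable $L$-coloring for every $k$-assignment $L$. *)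

theory Defs
  imports Complex_Main
begin

text \<open>The spider B(l_1,...,l_m): centre u = (0,0), v_{i,j} = (i,j) for 1 \<le> i \<le> m, 1 \<le> j \<le> l i.\<close>
definition spider_verts :: "nat \<Rightarrow> (nat \<Rightarrow> nat) \<Rightarrow> (nat \<times> nat) set" where
  "spider_verts m l = {(0,0)} \<union> {(i,j). 1 \<le> i \<and> i \<le> m \<and> 1 \<le> j \<and> j \<le> l i}"

definition spider_adj :: "nat \<Rightarrow> (nat \<Rightarrow> nat) \<Rightarrow> nat \<times> nat \<Rightarrow> nat \<times> nat \<Rightarrow> bool" where
  "spider_adj m l x y \<longleftrightarrow> x \<in> spider_verts m l \<and> y \<in> spider_verts m l \<and>
     ((x = (0,0) \<and> fst y \<ge> 1 \<and> snd y = 1) \<or>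
      (y = (0,0) \<and> fst x \<ge> 1 \<and> snd x = 1) \<or>
      (fst x \<ge> 1 \<and> fst x = fst y \<and> (snd y = snd x + 1 \<or> snd x = snd y + 1)))"

definition graph_square :: "'a set \<Rightarrow> ('a \<Rightarrow> 'a \<Rightarrow> bool) \<Rightarrow> 'a \<Rightarrow> 'a \<Rightarrow> bool" where
  "graph_square V E x y \<longleftrightarrow> x \<in> V \<and> y \<in> V \<and> x \<noteq> y \<and>
     (E x y \<or> (\<exists>z\<in>V. E x z \<and> E z y))"

definition k_assignment :: "'a set \<Rightarrow> nat \<Rightarrow> ('a \<Rightarrow> nat set) \<Rightarrow> bool" where
  "k_assignment V k L \<longleftrightarrow> (\<forall>v\<in>V. finite (L v) \<and> card (L v) = k)"

definition equitable_L_coloring ::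
  "'a set \<Rightarrow> ('a \<Rightarrow> 'a \<Rightarrow> bool) \<Rightarrow> nat \<Rightarrow> ('a \<Rightarrow> nat set) \<Rightarrow> ('a \<Rightarrow> nat) \<Rightarrow> bool" where
  "equitable_L_coloring V E k L f \<longleftrightarrow>
     (\<forall>v\<in>V. f v \<in> L v) \<and>
     (\<forall>x\<in>V. \<forall>y\<in>V. E x y \<longrightarrow> f x \<noteq> f y) \<and>
     (\<forall>c. card {v\<in>V. f v = c} \<le> nat \<lceil>real (card V) / real k\<rceil>)"

definition equitably_choosable :: "'a set \<Rightarrow> ('a \<Rightarrow> 'a \<Rightarrow> bool) \<Rightarrow> nat \<Rightarrow> bool" where
  "equitably_choosable V E k \<longleftrightarrow>
     (\<forall>L. k_assignment V k L \<longrightarrow> (\<exists>f. equitable_L_coloring V E k L f))"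

end

theory Submission
  imports Defs
begin

text \<open>
  List the vertices of the spider as u, then the legs one after another, each from its root
  outward, and cut this list into consecutive blocks of m + 2 vertices. The blocks are coloured in
  order, the vertices of one block with pairwise distinct colours taken from their lists minus the
  colours of their earlier neighbours in the square; then no colour is used more than once per
  block, hence at most \<lceil>n/(m+2)\<rceil> times. A vertex at depth at least two in its leg has at
  most two earlier neighbours, and one that does not start its block at most one; only roots of
  legs can have more, and then only as many as there are legs whose root lies in an earlier block.
  Moreover a full block always contains a vertex at depth at least three without earlier
  neighbours; this is where m \<ge> 3 and the monotonicity of the leg lengths enter. Counting with
  these bounds shows that for every w at most w vertices of a block keep at most w available
  colours, and under that condition distinct representatives can be chosen greedily.
\<close>

lemma sdr_if_few_small_sets:
  assumes "finite S" and "\<forall>z\<in>S. finite (A z)"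
    and "\<And>w. card {z\<in>S. card (A z) \<le> w} \<le> w"
  shows "\<exists>g. inj_on g S \<and> (\<forall>z\<in>S. g z \<in> A z)"
  using assms
proof (induction S arbitrary: A rule: finite_remove_induct)
  case empty
  then show ?case by simp
next
  case (remove S)
  obtain x0 where x0: "x0 \<in> S" "\<forall>z\<in>S. card (A x0) \<le> card (A z)"
    using ex_has_least_nat[of "\<lambda>z. z \<in> S" _ "\<lambda>z. card (A z)"] \<open>S \<noteq> {}\<close> by blast
  have "A x0 \<noteq> {}"
  proof
    assume "A x0 = {}"
    then have "x0 \<in> {z\<in>S. card (A z) \<le> 0}" using x0 by simp
    then show False using remove.prems(2)[of 0] \<open>finite S\<close> by (auto simp: card_eq_0_iff)
  qed
  then obtain c where c: "c \<in> A x0" by blast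
  \<comment> \<open>Assign to x0, whose set is smallest, some c and delete c from all other sets: each set
    shrinks by at most one while x0 leaves, so the counting condition is inherited.\<close>
  define A' where "A' z = A z - {c}" for z
  have card_A: "card (A z) \<le> Suc (card (A' z))" if "z \<in> S" for z
    using remove.prems(1) that unfolding A'_def by (simp add: card_Diff_singleton_if) linarith
  have "card {z \<in> S - {x0}. card (A' z) \<le> w} \<le> w" for w
  proof (cases "\<exists>z \<in> S - {x0}. card (A' z) \<le> w")
    case True
    then obtain z where z: "z \<in> S - {x0}" "card (A' z) \<le> w" by blast
    have x0_small: "x0 \<in> {z\<in>S. card (A z) \<le> Suc w}" using x0 z card_A[of z] by force
    have "{z \<in> S - {x0}. card (A' z) \<le> w} \<subseteq> {z\<in>S. card (A z) \<le> Suc w} - {x0}"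
      using card_A by force
    then have "card {z \<in> S - {x0}. card (A' z) \<le> w} \<le> card ({z\<in>S. card (A z) \<le> Suc w} - {x0})"
      using \<open>finite S\<close> by (intro card_mono) auto
    also have "\<dots> \<le> w"
      using x0_small \<open>finite S\<close> remove.prems(2)[of "Suc w"] by (simp add: card_Diff_singleton_if)
    finally show ?thesis .
  next
    case False
    then have "{z \<in> S - {x0}. card (A' z) \<le> w} = {}" by blast
    then show ?thesis by (simp only: card.empty le0)
  qed
  then obtain g where g: "inj_on g (S - {x0})" "\<forall>z\<in>S - {x0}. g z \<in> A' z"
    using remove.IH[OF x0(1), of A'] remove.prems(1) unfolding A'_def by auto
  have "inj_on (g(x0 := c)) S"
    using g unfolding A'_def inj_on_def by (metis DiffE DiffI fun_upd_apply singletonD singletonI)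
  moreover have "\<forall>z\<in>S. (g(x0 := c)) z \<in> A z" using g c unfolding A'_def by auto
  ultimately show ?case by blast
qed

definition earlier_nbrs :: "'a set \<Rightarrow> ('a \<Rightarrow> 'a \<Rightarrow> bool) \<Rightarrow> ('a \<Rightarrow> nat) \<Rightarrow> 'a \<Rightarrow> 'a set" where
  "earlier_nbrs V E \<beta> z = {y\<in>V. \<beta> y < \<beta> z \<and> (E y z \<or> E z y)}"

definition blockwise_L_coloring ::
  "'a set \<Rightarrow> ('a \<Rightarrow> 'a \<Rightarrow> bool) \<Rightarrow> ('a \<Rightarrow> nat) \<Rightarrow> ('a \<Rightarrow> nat set) \<Rightarrow> nat \<Rightarrow> ('a \<Rightarrow> nat) \<Rightarrow> bool" where
  "blockwise_L_coloring V E \<beta> L T f \<longleftrightarrow>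
     (\<forall>v\<in>V. \<beta> v < T \<longrightarrow> f v \<in> L v) \<and>
     (\<forall>x\<in>V. \<forall>y\<in>V. \<beta> x < T \<longrightarrow> \<beta> y < T \<longrightarrow> E x y \<longrightarrow> f x \<noteq> f y) \<and>
     (\<forall>x\<in>V. \<forall>y\<in>V. \<beta> x < T \<longrightarrow> \<beta> y = \<beta> x \<longrightarrow> x \<noteq> y \<longrightarrow> f x \<noteq> f y)"

lemma blockwise_L_coloring_Suc:
  assumes "finite V" and "k_assignment V k L" and "\<forall>x\<in>V. \<not> E x x"
    and "\<And>w. card {z\<in>V. \<beta> z = T \<and> k - card (earlier_nbrs V E \<beta> z) \<le> w} \<le> w"
    and "blockwise_L_coloring V E \<beta> L T f"
  shows "\<exists>f'. blockwise_L_coloring V E \<beta> L (Suc T) f'"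
proof -
  define B where "B = {z\<in>V. \<beta> z = T}"
  define A where "A z = L z - f ` earlier_nbrs V E \<beta> z" for z
  have fin_nbrs: "finite (earlier_nbrs V E \<beta> z)" for z
    using \<open>finite V\<close> unfolding earlier_nbrs_def by simp
  have card_A: "k - card (earlier_nbrs V E \<beta> z) \<le> card (A z)" if "z \<in> V" for z
  proof -
    have "k - card (earlier_nbrs V E \<beta> z) \<le> card (L z) - card (f ` earlier_nbrs V E \<beta> z)"
      using assms(2) that fin_nbrs card_image_le unfolding k_assignment_def
      by (metis diff_le_mono2)
    also have "\<dots> \<le> card (A z)"
      unfolding A_def by (rule diff_card_le_card_Diff) (simp add: fin_nbrs)
    finally show ?thesis .
  qed
  have "card {z\<in>B. card (A z) \<le> w} \<le> w" for w
  proof -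
    have "{z\<in>B. card (A z) \<le> w} \<subseteq> {z\<in>V. \<beta> z = T \<and> k - card (earlier_nbrs V E \<beta> z) \<le> w}"
      using card_A unfolding B_def by force
    then have "card {z\<in>B. card (A z) \<le> w}
        \<le> card {z\<in>V. \<beta> z = T \<and> k - card (earlier_nbrs V E \<beta> z) \<le> w}"
      using \<open>finite V\<close> by (intro card_mono) auto
    also have "\<dots> \<le> w" by (rule assms(4))
    finally show ?thesis .
  qed
  moreover have "\<forall>z\<in>B. finite (A z)"
    using assms(2) unfolding A_def B_def k_assignment_def by auto
  ultimately obtain g where g_inj: "inj_on g B" and g_A: "\<forall>z\<in>B. g z \<in> A z"
    using sdr_if_few_small_sets[of B A] assms(1) unfolding B_def by auto
  define f' where "f' z = (if \<beta> z = T then g z else f z)" for z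
  have new_vs_old: "f' z \<noteq> f' y" if "z \<in> V" "y \<in> V" "\<beta> z = T" "\<beta> y < T" "E y z \<or> E z y" for y z
  proof -
    have "y \<in> earlier_nbrs V E \<beta> z" using that unfolding earlier_nbrs_def by simp
    then show ?thesis using g_A that unfolding f'_def A_def B_def by auto
  qed
  have "blockwise_L_coloring V E \<beta> L (Suc T) f'"
    unfolding blockwise_L_coloring_def
  proof (intro conjI ballI impI)
    fix v assume "v \<in> V" "\<beta> v < Suc T"
    then show "f' v \<in> L v"
      using assms(5) g_A unfolding blockwise_L_coloring_def f'_def A_def B_def
      by (auto simp: less_Suc_eq)
  next
    fix x y assume "x \<in> V" "y \<in> V" "\<beta> x < Suc T" "\<beta> y < Suc T" "E x y"
    then show "f' x \<noteq> f' y"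
      using assms(3,5) new_vs_old[of x y] new_vs_old[of y x] g_inj
      unfolding blockwise_L_coloring_def f'_def B_def inj_on_def
      by (auto simp: less_Suc_eq)
  next
    fix x y assume "x \<in> V" "y \<in> V" "\<beta> x < Suc T" "\<beta> y = \<beta> x" "x \<noteq> y"
    then show "f' x \<noteq> f' y"
      using assms(5) g_inj unfolding blockwise_L_coloring_def f'_def B_def inj_on_def
      by (auto simp: less_Suc_eq)
  qed
  then show ?thesis by blast
qed

lemma blockwise_L_coloring_exists:
  assumes "finite V" and "k_assignment V k L" and "\<forall>x\<in>V. \<not> E x x"
    and "\<And>b w. card {z\<in>V. \<beta> z = b \<and> k - card (earlier_nbrs V E \<beta> z) \<le> w} \<le> w"
  shows "\<exists>f. blockwise_L_coloring V E \<beta> L T f"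
proof (induction T)
  case 0
  show ?case by (simp add: blockwise_L_coloring_def)
next
  case (Suc T)
  then show ?case using blockwise_L_coloring_Suc[OF assms(1-3) assms(4)] by blast
qed

lemma card_color_class_le_blocks:
  assumes "blockwise_L_coloring V E \<beta> L t f" and "\<forall>x\<in>V. \<beta> x < t"
  shows "card {v\<in>V. f v = c} \<le> t"
proof -
  have "inj_on \<beta> {v\<in>V. f v = c}"
    using assms unfolding blockwise_L_coloring_def inj_on_def by fastforce
  then have "card {v\<in>V. f v = c} = card (\<beta> ` {v\<in>V. f v = c})" by (rule card_image[symmetric])
  also have "\<dots> \<le> card {..<t}" using assms(2) by (intro card_mono) auto
  finally show ?thesis by simp
qed

lemma equitably_choosable_by_blocks:
  assumes "finite V" and "\<forall>x\<in>V. \<not> E x x"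
    and "\<forall>x\<in>V. \<beta> x < nat \<lceil>real (card V) / real k\<rceil>"
    and "\<And>b w. card {z\<in>V. \<beta> z = b \<and> k - card (earlier_nbrs V E \<beta> z) \<le> w} \<le> w"
  shows "equitably_choosable V E k"
  unfolding equitably_choosable_def
proof (intro allI impI)
  fix L assume "k_assignment V k L"
  then obtain f where f: "blockwise_L_coloring V E \<beta> L (nat \<lceil>real (card V) / real k\<rceil>) f"
    using blockwise_L_coloring_exists[OF assms(1) _ assms(2,4)] by blast
  then have "equitable_L_coloring V E k L f"
    using assms(3) card_color_class_le_blocks[OF f]
    unfolding equitable_L_coloring_def blockwise_L_coloring_def by blast
  then show "\<exists>f. equitable_L_coloring V E k L f" by blast
qed

lemma div_less_nat_ceiling:
  fixes p n k :: nat
  assumes "p < n" and "0 < k"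
  shows "p div k < nat \<lceil>real n / real k\<rceil>"
proof -
  have "p div k * k < n" using assms(1) div_times_less_eq_dividend le_less_trans by blast
  then have "real (p div k) < real n / real k"
    using assms(2) by (simp add: pos_less_divide_eq flip: of_nat_mult)
  then show ?thesis by linarith
qed

definition leg_offset :: "(nat \<Rightarrow> nat) \<Rightarrow> nat \<Rightarrow> nat" where
  "leg_offset l i = (\<Sum>i'\<in>{1..<i}. l i')"

definition spider_pos :: "(nat \<Rightarrow> nat) \<Rightarrow> nat \<times> nat \<Rightarrow> nat" where
  "spider_pos l x = (if fst x = 0 then 0 else leg_offset l (fst x) + snd x)"

definition spider_block :: "nat \<Rightarrow> (nat \<Rightarrow> nat) \<Rightarrow> nat \<times> nat \<Rightarrow> nat" where
  "spider_block m l x = spider_pos l x div (m + 2)"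

lemma leg_offset_Suc: "1 \<le> i \<Longrightarrow> leg_offset l (Suc i) = leg_offset l i + l i"
  unfolding leg_offset_def by (simp add: sum.atLeastLessThan_Suc)

lemma leg_offset_mono: "i \<le> i' \<Longrightarrow> leg_offset l i \<le> leg_offset l i'"
  unfolding leg_offset_def by (intro sum_mono2) auto

abbreviation spider_square :: "nat \<Rightarrow> (nat \<Rightarrow> nat) \<Rightarrow> nat \<times> nat \<Rightarrow> nat \<times> nat \<Rightarrow> bool" where
  "spider_square m l \<equiv> graph_square (spider_verts m l) (spider_adj m l)"

abbreviation spider_earlier_nbrs :: "nat \<Rightarrow> (nat \<Rightarrow> nat) \<Rightarrow> nat \<times> nat \<Rightarrow> (nat \<times> nat) set" where
  "spider_earlier_nbrs m l \<equiv> earlier_nbrs (spider_verts m l) (spider_square m l) (spider_block m l)"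

context
  fixes m :: nat and l :: "nat \<Rightarrow> nat"
begin

lemma mem_spider_verts_iff:
  "x \<in> spider_verts m l \<longleftrightarrow> x = (0,0) \<or> (1 \<le> fst x \<and> fst x \<le> m \<and> 1 \<le> snd x \<and> snd x \<le> l (fst x))"
  unfolding spider_verts_def by (cases x) auto

lemma spider_verts_eq: "spider_verts m l = insert (0,0) (SIGMA i:{1..m}. {1..l i})"
  unfolding spider_verts_def by auto

lemma finite_spider_verts: "finite (spider_verts m l)"
  unfolding spider_verts_eq by simp

lemma card_spider_verts: "card (spider_verts m l) = Suc (leg_offset l (Suc m))"
proof -
  have "card (spider_verts m l) = Suc (card (SIGMA i:{1..m}. {1..l i}))"
    unfolding spider_verts_eq by (subst card_insert_disjoint) auto
  also have "card (SIGMA i:{1..m}. {1..l i}) = leg_offset l (Suc m)"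
    unfolding leg_offset_def by (simp add: atLeastLessThanSuc_atLeastAtMost)
  finally show ?thesis .
qed

lemma spider_pos_le_leg_end:
  assumes "x \<in> spider_verts m l" and "1 \<le> fst x"
  shows "spider_pos l x \<le> leg_offset l (Suc (fst x))"
  using assms by (auto simp: mem_spider_verts_iff spider_pos_def leg_offset_Suc)

lemma spider_pos_less:
  assumes "x \<in> spider_verts m l" and "y \<in> spider_verts m l" and "fst x < fst y"
  shows "spider_pos l x < spider_pos l y"
proof (cases "fst x = 0")
  case True
  then show ?thesis using assms by (auto simp: mem_spider_verts_iff spider_pos_def)
next
  case False
  then have "spider_pos l x \<le> leg_offset l (Suc (fst x))"
    using assms(1) spider_pos_le_leg_end by simp
  also have "\<dots> \<le> leg_offset l (fst y)" using assms(3) by (intro leg_offset_mono) simp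
  also have "\<dots> < spider_pos l y"
    using assms(2,3) by (auto simp: mem_spider_verts_iff spider_pos_def)
  finally show ?thesis .
qed

lemma inj_on_spider_pos: "inj_on (spider_pos l) (spider_verts m l)"
proof (rule inj_onI)
  fix x y assume xy: "x \<in> spider_verts m l" "y \<in> spider_verts m l" "spider_pos l x = spider_pos l y"
  show "x = y"
  proof (cases "fst x = fst y")
    case True
    then show ?thesis using xy by (auto simp: mem_spider_verts_iff spider_pos_def prod_eq_iff)
  next
    case False
    then show ?thesis using xy spider_pos_less[of x y] spider_pos_less[of y x] by linarith
  qed
qed

lemma spider_pos_less_card: "x \<in> spider_verts m l \<Longrightarrow> spider_pos l x < card (spider_verts m l)"
  using spider_pos_le_leg_end[of x] leg_offset_mono[of "Suc (fst x)" "Suc m" l]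
  by (cases "fst x = 0") (auto simp: card_spider_verts mem_spider_verts_iff spider_pos_def)

lemma bij_spider_pos: "bij_betw (spider_pos l) (spider_verts m l) {..<card (spider_verts m l)}"
proof -
  have "spider_pos l ` spider_verts m l \<subseteq> {..<card (spider_verts m l)}"
    using spider_pos_less_card by blast
  moreover have "card (spider_pos l ` spider_verts m l) = card {..<card (spider_verts m l)}"
    using inj_on_spider_pos by (simp add: card_image)
  ultimately show ?thesis
    using inj_on_spider_pos by (simp add: bij_betw_def card_subset_eq)
qed

lemma spider_block_eq_iff:
  "spider_block m l z = b \<longleftrightarrow> b * (m + 2) \<le> spider_pos l z \<and> spider_pos l z < b * (m + 2) + (m + 2)"
  unfolding spider_block_def
proof
  assume "spider_pos l z div (m + 2) = b"
  then have "spider_pos l z = b * (m + 2) + spider_pos l z mod (m + 2)" by (metis div_mult_mod_eq)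
  moreover have "spider_pos l z mod (m + 2) < m + 2" by simp
  ultimately show "b * (m + 2) \<le> spider_pos l z \<and> spider_pos l z < b * (m + 2) + (m + 2)"
    by linarith
qed (simp add: div_nat_eqI mult.commute)

lemma spider_pos_image_block:
  "spider_pos l ` {z\<in>spider_verts m l. spider_block m l z = b}
    = {b * (m + 2)..<b * (m + 2) + (m + 2)} \<inter> {..<card (spider_verts m l)}"
proof -
  have "spider_pos l ` {z\<in>spider_verts m l. spider_block m l z = b}
      = {p \<in> spider_pos l ` spider_verts m l. b * (m + 2) \<le> p \<and> p < b * (m + 2) + (m + 2)}"
    unfolding spider_block_eq_iff by blast
  also have "spider_pos l ` spider_verts m l = {..<card (spider_verts m l)}"
    using bij_spider_pos by (simp add: bij_betw_def)
  finally show ?thesis by (simp add: set_eq_iff) blast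
qed

lemma card_spider_block:
  "card {z\<in>spider_verts m l. spider_block m l z = b}
    = card ({b * (m + 2)..<b * (m + 2) + (m + 2)} \<inter> {..<card (spider_verts m l)})"
proof -
  have "inj_on (spider_pos l) {z\<in>spider_verts m l. spider_block m l z = b}"
    by (rule inj_on_subset[OF inj_on_spider_pos]) auto
  then show ?thesis unfolding spider_pos_image_block[symmetric] by (simp add: card_image)
qed

lemma card_spider_block_le: "card {z\<in>spider_verts m l. spider_block m l z = b} \<le> m + 2"
  unfolding card_spider_block
  using card_mono[of "{b * (m + 2)..<b * (m + 2) + (m + 2)}"] by simp

lemma card_spider_block_le_remaining:
  "card {z\<in>spider_verts m l. spider_block m l z = b} \<le> card (spider_verts m l) - b * (m + 2)"
proof -
  have "card ({b * (m + 2)..<b * (m + 2) + (m + 2)} \<inter> {..<card (spider_verts m l)})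
      \<le> card {b * (m + 2)..<card (spider_verts m l)}"
    by (intro card_mono) auto
  then show ?thesis unfolding card_spider_block by simp
qed

lemma card_spider_pos_eq_le_1: "card {z\<in>spider_verts m l. spider_pos l z = p} \<le> 1"
proof -
  have "inj_on (spider_pos l) {z\<in>spider_verts m l. spider_pos l z = p}"
    by (rule inj_on_subset[OF inj_on_spider_pos]) auto
  then have "card {z\<in>spider_verts m l. spider_pos l z = p}
      = card (spider_pos l ` {z\<in>spider_verts m l. spider_pos l z = p})"
    by (rule card_image[symmetric])
  also have "\<dots> \<le> card {p}" by (intro card_mono) auto
  finally show ?thesis by simp
qed

lemma spider_adj_sym: "spider_adj m l x y \<longleftrightarrow> spider_adj m l y x"
  unfolding spider_adj_def by auto

lemma spider_square_sym: "spider_square m l x y \<longleftrightarrow> spider_square m l y x"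
  unfolding graph_square_def using spider_adj_sym by blast

lemma spider_square_nbr_of_leg_vertex:
  assumes "spider_square m l y z" and "1 \<le> fst z"
  shows "(y = (0,0) \<and> snd z \<le> 2)
    \<or> (fst y = fst z \<and> snd y \<noteq> snd z \<and> snd y < snd z + 3 \<and> snd z < snd y + 3)
    \<or> (snd z = 1 \<and> snd y = 1 \<and> 1 \<le> fst y \<and> fst y \<le> m)"
  using assms unfolding graph_square_def spider_adj_def spider_verts_def by (cases y; cases z) auto

lemma earlier_nbr_spider_pos:
  assumes "y \<in> spider_earlier_nbrs m l z"
  shows "y \<in> spider_verts m l" and "spider_square m l y z"
    and "spider_pos l y < spider_block m l z * (m + 2)"
    and "spider_block m l z * (m + 2) \<le> spider_pos l z"
proof -
  show "y \<in> spider_verts m l" and "spider_square m l y z"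
    using assms spider_square_sym unfolding earlier_nbrs_def by auto
  show "spider_pos l y < spider_block m l z * (m + 2)"
    using assms unfolding earlier_nbrs_def spider_block_def by (simp add: div_less_iff_less_mult)
  show "spider_block m l z * (m + 2) \<le> spider_pos l z"
    unfolding spider_block_def by (rule div_times_less_eq_dividend)
qed

lemma earlier_nbr_of_inner_vertex:
  assumes "z \<in> spider_verts m l" and "1 \<le> fst z" and "2 \<le> snd z"
    and "y \<in> spider_earlier_nbrs m l z"
  shows "(y = (0,0) \<and> snd z = 2)
    \<or> (\<exists>j. y = (fst z, j) \<and> 1 \<le> j \<and> j < snd z \<and> snd z \<le> j + 2
           \<and> leg_offset l (fst z) + j < spider_block m l z * (m + 2))"
  using spider_square_nbr_of_leg_vertex[OF earlier_nbr_spider_pos(2)[OF assms(4)] assms(2)]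
proof (elim disjE)
  assume same_leg: "fst y = fst z \<and> snd y \<noteq> snd z \<and> snd y < snd z + 3 \<and> snd z < snd y + 3"
  then have "spider_pos l y = leg_offset l (fst z) + snd y"
    and "spider_pos l z = leg_offset l (fst z) + snd z"
    using assms(2) by (simp_all add: spider_pos_def)
  moreover have "1 \<le> snd y"
    using earlier_nbr_spider_pos(1)[OF assms(4)] same_leg assms(2)
    by (auto simp: mem_spider_verts_iff)
  ultimately show ?thesis
    using same_leg earlier_nbr_spider_pos(3,4)[OF assms(4)]
    by (intro disjI2 exI[of _ "snd y"]) (auto simp: prod_eq_iff)
qed (use assms(3) in auto)

lemma card_earlier_nbrs_inner_vertex:
  assumes "z \<in> spider_verts m l" and "1 \<le> fst z" and "2 \<le> snd z"
  shows "card (spider_earlier_nbrs m l z) \<le> 2"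
proof -
  let ?C = "{if snd z = 2 then (0,0) else (fst z, snd z - 2), (fst z, snd z - 1)}"
  have "spider_earlier_nbrs m l z \<subseteq> ?C"
  proof
    fix y assume "y \<in> spider_earlier_nbrs m l z"
    from earlier_nbr_of_inner_vertex[OF assms this] show "y \<in> ?C"
    proof (elim disjE exE conjE)
      fix j assume "y = (fst z, j)" "1 \<le> j" "j < snd z" "snd z \<le> j + 2"
      then show ?thesis by (cases "j = snd z - 1") auto
    qed simp
  qed
  then have "card (spider_earlier_nbrs m l z) \<le> card ?C" by (intro card_mono) auto
  also have "\<dots> \<le> 2" by (simp add: card_insert_if)
  finally show ?thesis .
qed

lemma card_earlier_nbrs_inner_vertex_not_block_start:
  assumes "z \<in> spider_verts m l" and "1 \<le> fst z" and "2 \<le> snd z"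
    and "spider_pos l z \<noteq> spider_block m l z * (m + 2)"
  shows "card (spider_earlier_nbrs m l z) \<le> 1"
proof -
  let ?c = "if snd z = 2 then (0,0) else (fst z, snd z - 2)"
  have "spider_earlier_nbrs m l z \<subseteq> {?c}"
  proof
    fix y assume y: "y \<in> spider_earlier_nbrs m l z"
    have "spider_block m l z * (m + 2) < leg_offset l (fst z) + snd z"
      using earlier_nbr_spider_pos(4)[OF y] assms(2,4) by (simp add: spider_pos_def)
    with earlier_nbr_of_inner_vertex[OF assms(1-3) y] show "y \<in> {?c}"
    proof (elim disjE exE conjE)
      fix j assume "y = (fst z, j)" "1 \<le> j" "j < snd z" "snd z \<le> j + 2"
        "leg_offset l (fst z) + j < spider_block m l z * (m + 2)"
      moreover from this have "j = snd z - 2" using \<open>spider_block m l z * (m + 2) < _\<close> by linarith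
      ultimately show ?thesis by auto
    qed simp
  qed
  then show ?thesis using card_mono[of "{?c}"] by simp
qed

lemma earlier_nbrs_inner_vertex_empty:
  assumes "z \<in> spider_verts m l" and "1 \<le> fst z" and "3 \<le> snd z"
    and "spider_block m l z * (m + 2) + 2 \<le> spider_pos l z"
  shows "spider_earlier_nbrs m l z = {}"
proof -
  have "spider_pos l z = leg_offset l (fst z) + snd z" using assms(2) by (simp add: spider_pos_def)
  then show ?thesis
    using earlier_nbr_of_inner_vertex[OF assms(1,2)] assms(3,4) by fastforce
qed

lemma card_earlier_nbrs_first_vertex:
  assumes "z \<in> spider_verts m l" and "1 \<le> fst z" and "snd z = 1"
  shows "card (spider_earlier_nbrs m l z)
    \<le> Suc (card {i\<in>{1..m}. spider_block m l (i,1) < spider_block m l z})"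
proof -
  define I where "I = {i\<in>{1..m}. spider_block m l (i,1) < spider_block m l z}"
  have "spider_earlier_nbrs m l z \<subseteq> insert (0,0) ((\<lambda>i. (i,1)) ` I)"
  proof
    fix y assume y: "y \<in> spider_earlier_nbrs m l z"
    from spider_square_nbr_of_leg_vertex[OF earlier_nbr_spider_pos(2)[OF y] assms(2)] assms(3)
    show "y \<in> insert (0,0) ((\<lambda>i. (i,1)) ` I)"
    proof (elim disjE conjE)
      assume "fst y = fst z" "snd y \<noteq> snd z" "snd y < snd z + 3"
      moreover have "1 \<le> snd y"
        using earlier_nbr_spider_pos(1)[OF y] \<open>fst y = fst z\<close> assms(2)
        by (auto simp: mem_spider_verts_iff)
      ultimately have "spider_pos l z < spider_pos l y"
        using assms(2,3) by (simp add: spider_pos_def)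
      then show ?thesis using earlier_nbr_spider_pos(3,4)[OF y] by linarith
    next
      assume "snd y = 1" "1 \<le> fst y" "fst y \<le> m"
      moreover have "spider_block m l y < spider_block m l z"
        using y unfolding earlier_nbrs_def by simp
      moreover have "y = (fst y, 1)" using \<open>snd y = 1\<close> by (simp add: prod_eq_iff)
      ultimately show ?thesis
        unfolding I_def by (metis (mono_tags) atLeastAtMost_iff image_eqI insertCI mem_Collect_eq)
    qed simp
  qed
  then have "card (spider_earlier_nbrs m l z) \<le> card (insert (0,0) ((\<lambda>i. (i,1::nat)) ` I))"
    by (intro card_mono) (auto simp: I_def)
  also have "\<dots> \<le> Suc (card ((\<lambda>i. (i,1::nat)) ` I))" by (simp add: card_insert_if I_def)
  also have "\<dots> \<le> Suc (card I)" by (simp add: card_image_le I_def)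
  finally show ?thesis unfolding I_def .
qed

lemma leg_vertex_if_block_nonzero:
  assumes "z \<in> spider_verts m l" and "spider_block m l z \<noteq> 0"
  shows "1 \<le> fst z \<and> fst z \<le> m \<and> 1 \<le> snd z \<and> snd z \<le> l (fst z)"
  using assms by (auto simp: mem_spider_verts_iff spider_block_def spider_pos_def)

lemma first_leg_starts_in_block_0: "spider_block m l (1,1) = 0"
  by (simp add: spider_block_def spider_pos_def leg_offset_def)

lemma card_legs_starting_in_or_before_block:
  "card {i\<in>{1..m}. spider_block m l (i,1) = b} + card {i\<in>{1..m}. spider_block m l (i,1) < b}
    \<le> m"
proof -
  have "card {i\<in>{1..m}. spider_block m l (i,1) = b} + card {i\<in>{1..m}. spider_block m l (i,1) < b}
      = card ({i\<in>{1..m}. spider_block m l (i,1) = b} \<union> {i\<in>{1..m}. spider_block m l (i,1) < b})"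
    by (rule card_Un_disjoint[symmetric]) auto
  also have "\<dots> \<le> card {1..m}" by (intro card_mono) auto
  finally show ?thesis by simp
qed

lemma card_block_first_vertices:
  "card {z\<in>spider_verts m l. spider_block m l z = b \<and> snd z = 1}
    \<le> card {i\<in>{1..m}. spider_block m l (i,1) = b}"
proof -
  let ?I = "{i\<in>{1..m}. spider_block m l (i,1) = b}"
  have "{z\<in>spider_verts m l. spider_block m l z = b \<and> snd z = 1} \<subseteq> (\<lambda>i. (i,1)) ` ?I"
    by (auto simp: mem_spider_verts_iff image_iff prod_eq_iff)
  then have "card {z\<in>spider_verts m l. spider_block m l z = b \<and> snd z = 1}
      \<le> card ((\<lambda>i. (i,1::nat)) ` ?I)"
    by (intro card_mono) auto
  also have "\<dots> \<le> card {i\<in>{1..m}. spider_block m l (i,1) = b}" by (rule card_image_le) simp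
  finally show ?thesis .
qed

text \<open>
  If the vertex at position p has depth at most two, the last vertex of the previous leg lies at
  most two positions before p; if that leg is short too, then by monotonicity all earlier legs
  have length at most two, which cannot reach position 2m + 3.
\<close>

lemma deep_leg_vertex_near:
  assumes mono: "\<And>i j. 1 \<le> i \<Longrightarrow> i \<le> j \<Longrightarrow> j \<le> m \<Longrightarrow> l i \<le> l j"
    and "2 * m + 3 \<le> p" and "p < card (spider_verts m l)"
  shows "\<exists>z\<in>spider_verts m l.
    1 \<le> fst z \<and> 3 \<le> snd z \<and> p \<le> spider_pos l z + 2 \<and> spider_pos l z \<le> p"
proof -
  obtain x where x: "x \<in> spider_verts m l" "spider_pos l x = p"
    using bij_betw_imp_surj_on[OF bij_spider_pos] assms(3) by (metis imageE lessThan_iff)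
  then have "x \<noteq> (0,0)" using assms(2) by (auto simp: spider_pos_def)
  then have x_leg: "1 \<le> fst x" "fst x \<le> m" "snd x \<le> l (fst x)"
    using x(1) by (auto simp: mem_spider_verts_iff)
  have pos_x: "p = leg_offset l (fst x) + snd x" using x(2) x_leg(1) by (simp add: spider_pos_def)
  show ?thesis
  proof (cases "3 \<le> snd x")
    case True
    then show ?thesis using x x_leg by auto
  next
    case False
    then have offset_large: "p \<le> leg_offset l (fst x) + 2" using pos_x by linarith
    moreover have "leg_offset l 1 = 0" by (simp add: leg_offset_def)
    ultimately have "fst x \<noteq> 1" using assms(2) by auto
    define i where "i = fst x - 1"
    have i: "fst x = Suc i" "1 \<le> i" using x_leg(1) \<open>fst x \<noteq> 1\<close> unfolding i_def by auto
    have pos_last: "spider_pos l (i, l i) = leg_offset l (fst x)"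
      using i by (simp add: spider_pos_def leg_offset_Suc)
    show ?thesis
    proof (cases "3 \<le> l i")
      case True
      then have "(i, l i) \<in> spider_verts m l" using i x_leg(2) by (auto simp: mem_spider_verts_iff)
      then show ?thesis
        using True i(2) pos_last offset_large pos_x by (intro bexI[of _ "(i, l i)"]) auto
    next
      case False
      have "l i' \<le> 2" if "i' \<in> {1..<fst x}" for i'
        using that i x_leg(2) mono[of i' i] False by auto
      then have "leg_offset l (fst x) \<le> (\<Sum>i'\<in>{1..<fst x}. 2)"
        unfolding leg_offset_def by (rule sum_mono)
      then have "leg_offset l (fst x) \<le> 2 * m - 2" using x_leg(2) by simp
      then show ?thesis using offset_large assms(2) by linarith
    qed
  qed
qed

lemma full_block_has_vertex_without_earlier_nbrs:
  assumes "3 \<le> m" and "\<And>i j. 1 \<le> i \<Longrightarrow> i \<le> j \<Longrightarrow> j \<le> m \<Longrightarrow> l i \<le> l j"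
    and "1 \<le> b" and "b * (m + 2) + (m + 1) < card (spider_verts m l)"
  shows "\<exists>z\<in>spider_verts m l. spider_block m l z = b \<and> spider_earlier_nbrs m l z = {}"
proof -
  have "1 * (m + 2) \<le> b * (m + 2)" using assms(3) by (rule mult_le_mono1)
  then obtain z where z: "z \<in> spider_verts m l" "1 \<le> fst z" "3 \<le> snd z"
    and near: "b * (m + 2) + (m + 1) \<le> spider_pos l z + 2"
      "spider_pos l z \<le> b * (m + 2) + (m + 1)"
    using deep_leg_vertex_near[OF assms(2) _ assms(4)] by auto
  have "spider_block m l z = b" unfolding spider_block_eq_iff using near assms(1) by linarith
  moreover have "spider_block m l z * (m + 2) + 2 \<le> spider_pos l z"
    unfolding \<open>spider_block m l z = b\<close> using near assms(1) by linarith
  ultimately show ?thesis using earlier_nbrs_inner_vertex_empty[OF z] z(1) by blast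
qed

lemma card_block_first_vertices_le:
  assumes "1 \<le> b" and "1 \<le> m"
  shows "card {z\<in>spider_verts m l. spider_block m l z = b \<and> snd z = 1}
      + card {i\<in>{1..m}. spider_block m l (i,1) < b} \<le> m"
    and "1 \<le> card {i\<in>{1..m}. spider_block m l (i,1) < b}"
proof -
  show "card {z\<in>spider_verts m l. spider_block m l z = b \<and> snd z = 1}
      + card {i\<in>{1..m}. spider_block m l (i,1) < b} \<le> m"
    using card_block_first_vertices[of b] card_legs_starting_in_or_before_block[of b] by linarith
  have "1 \<in> {i\<in>{1..m}. spider_block m l (i,1) < b}"
    using assms first_leg_starts_in_block_0 by simp
  then have "0 < card {i\<in>{1..m}. spider_block m l (i,1) < b}" by (subst card_gt_0_iff) auto
  then show "1 \<le> card {i\<in>{1..m}. spider_block m l (i,1) < b}" by simp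
qed

lemma card_block_many_earlier_nbrs:
  assumes "1 \<le> b" and "w < m"
  shows "card {z\<in>spider_verts m l.
    spider_block m l z = b \<and> m + 2 - w \<le> card (spider_earlier_nbrs m l z)} \<le> w"
proof -
  let ?S = "{z\<in>spider_verts m l.
    spider_block m l z = b \<and> m + 2 - w \<le> card (spider_earlier_nbrs m l z)}"
  let ?F = "{z\<in>spider_verts m l. spider_block m l z = b \<and> snd z = 1}"
  let ?e = "card {i\<in>{1..m}. spider_block m l (i,1) < b}"
  have "?S \<subseteq> ?F"
  proof
    fix z assume z: "z \<in> ?S"
    then have leg: "z \<in> spider_verts m l" "1 \<le> fst z" "1 \<le> snd z"
      using leg_vertex_if_block_nonzero[of z] assms(1) by auto
    show "z \<in> ?F"
    proof (rule ccontr)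
      assume "z \<notin> ?F"
      then have "2 \<le> snd z" using z leg by auto
      then show False using card_earlier_nbrs_inner_vertex[OF leg(1,2)] z assms(2) by auto
    qed
  qed
  show ?thesis
  proof (cases "?S = {}")
    case False
    then obtain z where z: "z \<in> ?S" by blast
    with \<open>?S \<subseteq> ?F\<close> have "z \<in> spider_verts m l" "spider_block m l z = b" "snd z = 1"
      and "m + 2 - w \<le> card (spider_earlier_nbrs m l z)"
      by auto
    then have "m + 2 - w \<le> Suc ?e"
      using card_earlier_nbrs_first_vertex[of z] leg_vertex_if_block_nonzero[of z] assms(1) by auto
    moreover have "card ?S \<le> card ?F"
      using \<open>?S \<subseteq> ?F\<close> finite_spider_verts by (intro card_mono) auto
    ultimately show ?thesis using card_block_first_vertices_le(1)[OF assms(1)] assms(2) by linarith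
  next
    case True
    then show ?thesis by (simp only: card.empty le0)
  qed
qed

lemma card_block_two_earlier_nbrs:
  assumes "1 \<le> b" and "1 \<le> m"
  shows "card {z\<in>spider_verts m l. spider_block m l z = b \<and> 2 \<le> card (spider_earlier_nbrs m l z)}
    \<le> m"
proof -
  let ?S = "{z\<in>spider_verts m l. spider_block m l z = b \<and> 2 \<le> card (spider_earlier_nbrs m l z)}"
  let ?F = "{z\<in>spider_verts m l. spider_block m l z = b \<and> snd z = 1}"
  let ?start = "{z\<in>spider_verts m l. spider_pos l z = b * (m + 2)}"
  have "?S \<subseteq> ?F \<union> ?start"
  proof
    fix z assume z: "z \<in> ?S"
    then have leg: "z \<in> spider_verts m l" "1 \<le> fst z" "1 \<le> snd z"
      using leg_vertex_if_block_nonzero[of z] assms(1) by auto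
    show "z \<in> ?F \<union> ?start"
    proof (rule ccontr)
      assume "z \<notin> ?F \<union> ?start"
      then have "2 \<le> snd z" "spider_pos l z \<noteq> spider_block m l z * (m + 2)" using z leg by auto
      then show False using card_earlier_nbrs_inner_vertex_not_block_start[OF leg(1,2)] z by auto
    qed
  qed
  then have "card ?S \<le> card (?F \<union> ?start)" using finite_spider_verts by (intro card_mono) auto
  also have "\<dots> \<le> card ?F + card ?start" by (rule card_Un_le)
  also have "\<dots> \<le> card ?F + 1" by (rule add_left_mono[OF card_spider_pos_eq_le_1])
  finally show ?thesis using card_block_first_vertices_le[OF assms] by linarith
qed

lemma card_block_some_earlier_nbr:
  assumes "3 \<le> m" and "\<And>i j. 1 \<le> i \<Longrightarrow> i \<le> j \<Longrightarrow> j \<le> m \<Longrightarrow> l i \<le> l j" and "1 \<le> b"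
  shows "card {z\<in>spider_verts m l. spider_block m l z = b \<and> 1 \<le> card (spider_earlier_nbrs m l z)}
    \<le> m + 1"
proof -
  let ?S = "{z\<in>spider_verts m l. spider_block m l z = b \<and> 1 \<le> card (spider_earlier_nbrs m l z)}"
  let ?B = "{z\<in>spider_verts m l. spider_block m l z = b}"
  show ?thesis
  proof (cases "b * (m + 2) + (m + 1) < card (spider_verts m l)")
    case True
    then obtain z0 where z0: "z0 \<in> ?B" "spider_earlier_nbrs m l z0 = {}"
      using full_block_has_vertex_without_earlier_nbrs[OF assms] by blast
    then have "card ?S \<le> card (?B - {z0})" using finite_spider_verts by (intro card_mono) auto
    also have "\<dots> = card ?B - 1" using z0 finite_spider_verts by simp
    finally show ?thesis using card_spider_block_le[of b] by linarith
  next
    case False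
    have "card ?S \<le> card ?B" using finite_spider_verts by (intro card_mono) auto
    then show ?thesis using card_spider_block_le_remaining[of b] False by linarith
  qed
qed

lemma spider_block_condition:
  assumes "3 \<le> m" and "\<And>i j. 1 \<le> i \<Longrightarrow> i \<le> j \<Longrightarrow> j \<le> m \<Longrightarrow> l i \<le> l j"
  shows "card {z\<in>spider_verts m l.
    spider_block m l z = b \<and> m + 2 - card (spider_earlier_nbrs m l z) \<le> w} \<le> w"
proof -
  let ?S = "{z\<in>spider_verts m l.
    spider_block m l z = b \<and> m + 2 - card (spider_earlier_nbrs m l z) \<le> w}"
  consider "m + 2 \<le> w" | "b = 0" "w < m + 2" | "1 \<le> b" "w < m" | "1 \<le> b" "w = m"
    | "1 \<le> b" "w = m + 1"
    by linarith
  then show ?thesis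
  proof cases
    case 1
    have "card ?S \<le> card {z\<in>spider_verts m l. spider_block m l z = b}"
      using finite_spider_verts by (intro card_mono) auto
    then show ?thesis using card_spider_block_le[of b] 1 by linarith
  next
    case 2
    then have "?S = {}" by (auto simp: earlier_nbrs_def)
    then show ?thesis by (simp only: card.empty le0)
  next
    case 3
    then have "?S = {z\<in>spider_verts m l.
      spider_block m l z = b \<and> m + 2 - w \<le> card (spider_earlier_nbrs m l z)}" by auto
    then show ?thesis using card_block_many_earlier_nbrs[OF 3] by (simp only:)
  next
    case 4
    then have "?S = {z\<in>spider_verts m l.
      spider_block m l z = b \<and> 2 \<le> card (spider_earlier_nbrs m l z)}" by auto
    then show ?thesis using card_block_two_earlier_nbrs[of b] 4 assms(1) by simp
  next
    case 5
    then have "?S = {z\<in>spider_verts m l.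
      spider_block m l z = b \<and> 1 \<le> card (spider_earlier_nbrs m l z)}" by auto
    then show ?thesis using card_block_some_earlier_nbr[OF assms 5(1)] 5(2) by simp
  qed
qed

lemma spider_block_less_ceiling:
  assumes "z \<in> spider_verts m l"
  shows "spider_block m l z < nat \<lceil>real (card (spider_verts m l)) / real (m + 2)\<rceil>"
  unfolding spider_block_def
  using spider_pos_less_card[OF assms] by (rule div_less_nat_ceiling) simp

end

theorem lemma2p4:
  fixes m :: nat and l :: "nat \<Rightarrow> nat"
  assumes "m \<ge> 3"
    and "\<And>i. 1 \<le> i \<Longrightarrow> i \<le> m \<Longrightarrow> l i \<ge> 1"
    and "\<And>i j. 1 \<le> i \<Longrightarrow> i \<le> j \<Longrightarrow> j \<le> m \<Longrightarrow> l i \<le> l j"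
  shows "equitably_choosable (spider_verts m l)
           (graph_square (spider_verts m l) (spider_adj m l)) (m + 2)"
proof (rule equitably_choosable_by_blocks[where \<beta> = "spider_block m l"])
  show "finite (spider_verts m l)" by (rule finite_spider_verts)
  show "\<forall>x\<in>spider_verts m l. \<not> graph_square (spider_verts m l) (spider_adj m l) x x"
    by (simp add: graph_square_def)
  show "\<forall>x\<in>spider_verts m l.
      spider_block m l x < nat \<lceil>real (card (spider_verts m l)) / real (m + 2)\<rceil>"
    using spider_block_less_ceiling by blast
  show "card {z\<in>spider_verts m l.
      spider_block m l z = b \<and> m + 2 - card (spider_earlier_nbrs m l z) \<le> w} \<le> w" for b w
    by (rule spider_block_condition[OF assms(1,3)])
qed

end
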